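(* Let $\mathcal{H}=\operatorname{coh}\mathbb{X}$ for a weighted projective line of weight type $(p_1,\ldots,p_t)$, where $p_1,\ldots,p_r$ are even and $p_{r+1},\ldots,p_t$ are odd, and $\mathcal{C}=\mathcal{C}(\mathcal{H})$. (i) If $r\ge1$, then the linear forms (on $\overline{K}_0(\mathcal{C})$ induced by) $\langle\hat s_1,-\rangle,\ \langle\tilde s_2-\tilde s_1,-\rangle,\ldots,\langle\tilde s_r-\tilde s_1,-\rangle$ form a $\mathbb{Z}$-basis of $\overline{K}_0(\mathcal{C})^*=\operatorname{Hom}(\overline{K}_0(\mathcal{C}),\mathbb{Z})$, where $\hat s_1=\sum_{j=0}^{p_1-1}(-1)^j\Phi^js_1$ and $\tilde s_i=\sum_{j=0}^{p_i/2-1}\Phi^{2j}s_i$. (ii) If $r=0$, then $\operatorname{rk}_2$ and $\deg_2$ form a $\mathbb{Z}_2$-basis of $\overline{K}_0(\mathcal{C})^*=\operatorname{Hom}(\overline{K}_0(\mathcal{C}),\mathbb{Z}_2)$.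
   Context: $k$ algebraically closed; $\mathcal{H}=\operatorname{coh}\mathbb{X}$ hereditary abelian with AR translation $\tau$ and Serre duality; finite length objects form exceptional tubes of ranks $p_1,\ldots,p_t$ and homogeneous tubes of rank $1$. $L$ structure sheaf, $a=[L]$; $S_i$ ($1\le i\le t$) the unique simple in the $i$-th exceptional tube with $\operatorname{Hom}(L,S_i)\ne0$, $s_i=[S_i]$; $S_0$ simple in a homogeneous tube, $s_0=[S_0]$. Euler form $\langle[X],[Y]\rangle=\dim\operatorname{Hom}(X,Y)-\dim\operatorname{Ext}^1(X,Y)$; Coxeter transformation $\Phi[X]=[\tau X]$ (so $\Phi^{p_i}s_i=s_i$). $\operatorname{rk}(x)=\langle x,s_0\rangle$, $\deg(x)=\sum_{j=0}^{p-1}\langle\Phi^ja,x-\operatorname{rk}(x)a\rangle$, $p=\operatorname{lcm}(p_i)$; $\operatorname{rk}_2,\deg_2$ their reductions mod $2$ on $K_0(\mathcal{H})\otimes\mathbb{Z}_2$. With $\mathcal{D}=D^b(\mathcal{H})$, $F=\tau^{-1}\Sigma$, the cluster category $\mathcal{C}=\mathcal{D}/F^{\mathbb{Z}}$ has $\operatorname{Hom}_{\mathcal{C}}(X,Y)=\bigoplus_i\operatorname{Hom}_{\mathcal{D}}(X,F^iY)$ and projection $\pi$; $\overline{K}_0(\mathcal{C})$ is the Grothendieck group with respect to induced triangles (images under $\pi$ of exact triangles), equal to $\operatorname{Coker}(1+\Phi)$ on $K_0(\mathcal{H})$; linear forms on $K_0(\mathcal{H})$ (resp. mod 2) killing $\operatorname{Im}(1+\Phi)$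 are identified with linear forms on $\overline{K}_0(\mathcal{C})$. *)

theory Defs
  imports Main "HOL-Library.Z2" "HOL-Library.Function_Algebras"
begin

text \<open>Concrete model of the Grothendieck group K_0(coh X) of a weighted projective
line of weight type ps = [p_1,...,p_t] (tubes indexed 0..t-1 here), with its Euler form
and Coxeter transformation.  K_0 is free abelian with basis
  KA = a = [L],  KP = s_0 = [S_0] (simple in a homogeneous tube),
  KS i j = [S_{i,j}]  for i < t, 1 <= j < p_i,
where S_{i,0} = S_i is the simple of tube i with Hom(L,S_i) nonzero and the simples of
tube i are labelled so that tau S_{i,j} = S_{i,j+1 mod p_i}.  One has
[S_{i,0}] = s_0 - sum_{j=1}^{p_i-1} [S_{i,j}].\<close>

datatype kidx = KA | KP | KS nat nat

definition kbasis :: "nat list \<Rightarrow> kidx set" where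
  "kbasis ps = {KA, KP} \<union> {KS i j | i j. i < length ps \<and> 1 \<le> j \<and> j < ps ! i}"

definition K0 :: "nat list \<Rightarrow> (kidx \<Rightarrow> int) set" where
  "K0 ps = {x. \<forall>b. b \<notin> kbasis ps \<longrightarrow> x b = 0}"

definition kvec :: "kidx \<Rightarrow> kidx \<Rightarrow> int" where
  "kvec b = (\<lambda>c. if c = b then 1 else 0)"

text \<open>Euler form on basis elements (Hom minus Ext^1, computed via Serre duality
Ext^1(X,Y) = D Hom(Y, tau X)).\<close>
fun euler_basis :: "nat list \<Rightarrow> kidx \<Rightarrow> kidx \<Rightarrow> int" where
  "euler_basis ps KA KA = 1"
| "euler_basis ps KA KP = 1"
| "euler_basis ps KP KA = -1"
| "euler_basis ps KP KP = 0"
| "euler_basis ps KA (KS i j) = 0"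
| "euler_basis ps (KS i j) KA = (if j = ps ! i - 1 then -1 else 0)"
| "euler_basis ps KP (KS i j) = 0"
| "euler_basis ps (KS i j) KP = 0"
| "euler_basis ps (KS i j) (KS i' k) =
     (if i = i' then (if j = k then 1 else 0) - (if k = j + 1 then 1 else 0) else 0)"

definition euler :: "nat list \<Rightarrow> (kidx \<Rightarrow> int) \<Rightarrow> (kidx \<Rightarrow> int) \<Rightarrow> int" where
  "euler ps x y = (\<Sum>b\<in>kbasis ps. \<Sum>c\<in>kbasis ps. x b * y c * euler_basis ps b c)"

definition cls_a :: "kidx \<Rightarrow> int" where "cls_a = kvec KA"
definition cls_s0 :: "kidx \<Rightarrow> int" where "cls_s0 = kvec KP"

definition simple_cls :: "nat list \<Rightarrow> nat \<Rightarrow> nat \<Rightarrow> kidx \<Rightarrow> int" where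
  "simple_cls ps i j =
     (if j mod (ps ! i) = 0 then kvec KP - (\<Sum>k\<in>{1..<ps ! i}. kvec (KS i k))
      else kvec (KS i (j mod (ps ! i))))"

definition cls_s :: "nat list \<Rightarrow> nat \<Rightarrow> kidx \<Rightarrow> int" where
  "cls_s ps i = simple_cls ps i 0"

text \<open>Coxeter transformation Phi[X] = [tau X] on basis elements:
tau L = L(omega), [L(omega)] = a - 2 s_0 + sum_{i,j>=1} [S_{i,j}];
tau S_0 = S_0; tau S_{i,j} = S_{i,j+1}.\<close>
fun coxeter_basis :: "nat list \<Rightarrow> kidx \<Rightarrow> kidx \<Rightarrow> int" where
  "coxeter_basis ps KA = kvec KA - 2 * kvec KP
      + (\<Sum>i<length ps. \<Sum>j\<in>{1..<ps ! i}. kvec (KS i j))"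
| "coxeter_basis ps KP = kvec KP"
| "coxeter_basis ps (KS i j) = simple_cls ps i (j + 1)"

definition coxeter :: "nat list \<Rightarrow> (kidx \<Rightarrow> int) \<Rightarrow> kidx \<Rightarrow> int" where
  "coxeter ps x = (\<Sum>b\<in>kbasis ps. (\<lambda>c. x b * coxeter_basis ps b c))"

definition rk :: "nat list \<Rightarrow> (kidx \<Rightarrow> int) \<Rightarrow> int" where
  "rk ps x = euler ps x cls_s0"

definition wlcm :: "nat list \<Rightarrow> nat" where
  "wlcm ps = Lcm (set ps)"

definition deg :: "nat list \<Rightarrow> (kidx \<Rightarrow> int) \<Rightarrow> int" where
  "deg ps x = (\<Sum>j<wlcm ps. euler ps ((coxeter ps ^^ j) cls_a)
                                     (x - (\<lambda>c. rk ps x * cls_a c)))"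

definition rk2 :: "nat list \<Rightarrow> (kidx \<Rightarrow> int) \<Rightarrow> bit" where
  "rk2 ps x = of_int (rk ps x)"

definition deg2 :: "nat list \<Rightarrow> (kidx \<Rightarrow> int) \<Rightarrow> bit" where
  "deg2 ps x = of_int (deg ps x)"

definition linform :: "nat list \<Rightarrow> (kidx \<Rightarrow> int) \<Rightarrow> (kidx \<Rightarrow> int) \<Rightarrow> int" where
  "linform ps phi x = (\<Sum>b\<in>kbasis ps. x b * phi b)"

definition linform2 :: "nat list \<Rightarrow> (kidx \<Rightarrow> bit) \<Rightarrow> (kidx \<Rightarrow> int) \<Rightarrow> bit" where
  "linform2 ps phi x = (\<Sum>b\<in>kbasis ps. of_int (x b) * phi b)"

text \<open>A form on K_0 induces a form on Kbar_0(C) = Coker(1 + Phi) iff it kills Im(1 + Phi).\<close>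
definition kills_image :: "nat list \<Rightarrow> ((kidx \<Rightarrow> int) \<Rightarrow> 'a::zero) \<Rightarrow> bool" where
  "kills_image ps f \<longleftrightarrow> (\<forall>x\<in>K0 ps. f (x + coxeter ps x) = 0)"

definition s_hat :: "nat list \<Rightarrow> nat \<Rightarrow> kidx \<Rightarrow> int" where
  "s_hat ps i = (\<Sum>j<ps ! i. (\<lambda>c. (-1) ^ j * (coxeter ps ^^ j) (cls_s ps i) c))"

definition s_tilde :: "nat list \<Rightarrow> nat \<Rightarrow> kidx \<Rightarrow> int" where
  "s_tilde ps i = (\<Sum>j< ps ! i div 2. (coxeter ps ^^ (2 * j)) (cls_s ps i))"

text \<open>The r forms of part (i), indexed 0..r-1:
form 0 = <hat s_1, ->, form k = <tilde s_{k+1} - tilde s_1, -> for 1 <= k < r.\<close>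
definition forms_i :: "nat list \<Rightarrow> nat \<Rightarrow> (kidx \<Rightarrow> int) \<Rightarrow> int" where
  "forms_i ps k = (if k = 0 then euler ps (s_hat ps 0)
                   else euler ps (s_tilde ps k - s_tilde ps 0))"

end

(*
  A form on K_0 is given by its values phi on the basis a, s_0, [S_{i,j}] (1 <= j < p_i), and it
  kills Im(1 + Phi) iff the transpose of Phi sends phi to -phi. Tube by tube this says:
  2 phi(s_0) = 0, consecutive values phi[S_{i,j}] and phi[S_{i,j+1}] are opposite, the last one
  equals the tube sum minus phi(s_0), and 2 phi(a) - 2 phi(s_0) + sum phi[S_{i,j}] = 0.

  Over Z this means phi(s_0) = 0 and phi[S_{i,j}] = (-1)^j z_i, where the amplitudes z_i vanish
  on odd tubes and 2 phi(a) = sum z_i; conversely every such pair (phi(a), z) is a solution.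
  The forms <hat s_1,-> and <tilde s_k - tilde s_1,-> are the solutions with (phi(a), z) equal
  to (1, 2 e_1) and (0, e_k - e_1). As z_1 = 2 phi(a) - z_2 - ... - z_r, the numbers
  phi(a), z_2, ..., z_r are free coordinates on the solutions, and they are the coefficients.

  Over Z_2 with all p_i odd, each tube contributes an even number p_i - 1 of basis vectors, and
  the conditions say that phi is constant on s_0 and all [S_{i,j}]; so phi is determined by
  phi(a) and phi(s_0). Now rk_2 is the a-coordinate, while <Phi^j a, S_{i,k}> = 1 exactly when
  j = k mod p_i, so deg_2 vanishes on a and takes the odd values lcm(p_i) on s_0 and
  lcm(p_i)/p_i on [S_{i,k}].
*)

theory Submission
  imports Defs
begin

lemma sum_fun_apply: "(\<Sum>a\<in>A. f a) x = (\<Sum>a\<in>A. f a x)"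
  by (induction A rule: infinite_finite_induct) auto

lemma sum_telescope_from_1:
  fixes f :: "nat \<Rightarrow> 'a::ab_group_add"
  shows "(\<Sum>k\<in>{1..<Suc n}. f k - (if 2 \<le> k then f (k - 1) else 0)) = (if n = 0 then 0 else f n)"
  by (induction n) auto

lemma sum_alternating_signs:
  "1 \<le> p \<Longrightarrow> (\<Sum>j\<in>{1..<p}. (-1) ^ j :: int) = (if even p then -1 else 0)"
  by (induction p rule: dec_induct) (simp_all add: sum.atLeastLessThan_Suc)

lemma sum_indicator_mod_eq:
  assumes "k < n"
  shows "(\<Sum>j<n * q. if j mod n = k then 1 else 0 :: int) = int q"
proof (induction q)
  case (Suc q)
  have "(\<Sum>j<n * Suc q. if j mod n = k then 1 else 0 :: int) =
      (\<Sum>j<n * q. if j mod n = k then 1 else 0) + (\<Sum>j\<in>{n * q..<n * q + n}. if j mod n = k then 1 else 0)"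
    by (simp add: sum.atLeastLessThan_concat[symmetric] lessThan_atLeast0 add.commute)
  also have "(\<Sum>j\<in>{n * q..<n * q + n}. if j mod n = k then 1 else 0 :: int) =
      (\<Sum>l<n. if (l + n * q) mod n = k then 1 else 0)"
    using sum.shift_bounds_nat_ivl[of "\<lambda>j. if j mod n = k then 1 else 0 :: int" 0 "n * q" n]
    by (simp add: lessThan_atLeast0 add.commute)
  also have "\<dots> = 1"
    using assms by simp
  finally show ?case
    using Suc.IH by simp
qed simp

lemma Suc_mod_eq_Suc_mod_iff:
  fixes j n p :: nat
  assumes "0 < p"
  shows "Suc j mod p = Suc n mod p \<longleftrightarrow> j mod p = n mod p"
proof -
  have "j mod p < p" "n mod p < p"
    using assms by auto
  then show ?thesis
    by (auto simp: mod_Suc)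
qed

lemma of_nat_bit_eq_0_iff: "(of_nat n :: bit) = 0 \<longleftrightarrow> even n"
  by (induction n) auto

lemma bit_add_eq_0_iff: "x + y = (0::bit) \<longleftrightarrow> x = y"
  by (cases x; cases y) simp_all

section \<open>Coordinates on K_0\<close>

lemma kbasis_eq: "kbasis ps = {KA, KP} \<union> (\<lambda>(i, j). KS i j) ` (SIGMA i:{..<length ps}. {1..<ps ! i})"
  by (auto simp: kbasis_def)

lemma finite_kbasis [simp]: "finite (kbasis ps)"
  by (simp add: kbasis_eq)

lemma mem_kbasis [simp]:
  "KA \<in> kbasis ps" "KP \<in> kbasis ps"
  "KS i j \<in> kbasis ps \<longleftrightarrow> i < length ps \<and> 1 \<le> j \<and> j < ps ! i"
  by (auto simp: kbasis_def)

lemma ball_kbasis: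
  "(\<forall>b\<in>kbasis ps. P b) \<longleftrightarrow>
     P KA \<and> P KP \<and> (\<forall>i<length ps. \<forall>j. 1 \<le> j \<and> j < ps ! i \<longrightarrow> P (KS i j))"
  by (auto simp: kbasis_def)

lemma sum_kbasis:
  "(\<Sum>b\<in>kbasis ps. f b) = f KA + f KP + (\<Sum>i<length ps. \<Sum>j\<in>{1..<ps ! i}. f (KS i j))"
proof -
  let ?S = "SIGMA i:{..<length ps}. {1..<ps ! i}"
  have "(\<Sum>b\<in>kbasis ps. f b) = (\<Sum>b\<in>{KA, KP}. f b) + (\<Sum>b\<in>(\<lambda>(i, j). KS i j) ` ?S. f b)"
    unfolding kbasis_eq by (rule sum.union_disjoint) auto
  also have "(\<Sum>b\<in>(\<lambda>(i, j). KS i j) ` ?S. f b) = (\<Sum>(i, j)\<in>?S. f (KS i j))"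
    by (subst sum.reindex) (auto simp: inj_on_def split_def)
  finally show ?thesis
    by (simp add: sum.Sigma)
qed

lemma kvec_in_K0: "b \<in> kbasis ps \<Longrightarrow> kvec b \<in> K0 ps"
  by (auto simp: K0_def kvec_def)

definition coord_form :: "nat list \<Rightarrow> (kidx \<Rightarrow> 'a::comm_ring_1) \<Rightarrow> (kidx \<Rightarrow> int) \<Rightarrow> 'a" where
  "coord_form ps phi x = (\<Sum>b\<in>kbasis ps. of_int (x b) * phi b)"

lemma linform_eq_coord_form: "linform ps phi = coord_form ps phi"
  by (simp add: fun_eq_iff linform_def coord_form_def)

lemma linform2_eq_coord_form: "linform2 ps phi = coord_form ps phi"
  by (simp add: fun_eq_iff linform2_def coord_form_def)

lemma coord_form_add: "coord_form ps phi (x + y) = coord_form ps phi x + coord_form ps phi y"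
  by (simp add: coord_form_def distrib_right sum.distrib)

lemma coord_form_diff: "coord_form ps phi (x - y) = coord_form ps phi x - coord_form ps phi y"
  by (simp add: coord_form_def left_diff_distrib sum_subtractf)

lemma coord_form_scale: "coord_form ps phi (\<lambda>c. a * x c) = of_int a * coord_form ps phi x"
  by (simp add: coord_form_def sum_distrib_left mult.assoc)

lemma coord_form_numeral_mult: "coord_form ps phi (numeral n * x) = numeral n * coord_form ps phi x"
  by (simp add: coord_form_def sum_distrib_left mult.assoc)

lemma coord_form_sum: "coord_form ps phi (\<Sum>k\<in>A. x k) = (\<Sum>k\<in>A. coord_form ps phi (x k))"
  unfolding coord_form_def sum_fun_apply of_int_sum sum_distrib_right
  by (rule sum.swap)

lemma coord_form_kvec:
  assumes "b \<in> kbasis ps"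
  shows "coord_form ps phi (kvec b) = phi b"
proof -
  have "coord_form ps phi (kvec b) = (\<Sum>c\<in>kbasis ps. if c = b then phi c else 0)"
    unfolding coord_form_def kvec_def by (intro sum.cong) auto
  then show ?thesis
    using assms by simp
qed

lemma coord_form_cong:
  "(\<And>b. b \<in> kbasis ps \<Longrightarrow> phi b = psi b) \<Longrightarrow> coord_form ps phi = coord_form ps psi"
  unfolding coord_form_def fun_eq_iff by (auto intro!: sum.cong)

lemma coord_form_eq_on_K0_iff:
  "(\<forall>x\<in>K0 ps. coord_form ps phi x = coord_form ps psi x) \<longleftrightarrow> (\<forall>b\<in>kbasis ps. phi b = psi b)"
  by (metis coord_form_cong coord_form_kvec kvec_in_K0)

lemma coord_form_eq_0_iff:
  "(\<forall>x\<in>K0 ps. coord_form ps phi x = 0) \<longleftrightarrow> (\<forall>b\<in>kbasis ps. phi b = 0)"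
proof
  assume "\<forall>x\<in>K0 ps. coord_form ps phi x = 0"
  then show "\<forall>b\<in>kbasis ps. phi b = 0"
    by (metis kvec_in_K0 coord_form_kvec)
next
  assume "\<forall>b\<in>kbasis ps. phi b = 0"
  then have "coord_form ps phi = coord_form ps (\<lambda>_. 0)"
    by (intro coord_form_cong) auto
  then show "\<forall>x\<in>K0 ps. coord_form ps phi x = 0"
    by (simp add: coord_form_def)
qed

lemma coord_form_of_int:
  "(of_int (coord_form ps phi x) :: 'a::comm_ring_1) = coord_form ps (\<lambda>b. of_int (phi b)) x"
  by (simp add: coord_form_def)

lemma coord_form_add_coeffs:
  "coord_form ps phi x + coord_form ps psi x = coord_form ps (\<lambda>b. phi b + psi b) x"
  by (simp add: coord_form_def distrib_left sum.distrib)

lemma coord_form_lincomb: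
  "a * coord_form ps phi x + c * coord_form ps psi x = coord_form ps (\<lambda>b. a * phi b + c * psi b) x"
  by (simp add: coord_form_def sum_distrib_left distrib_left sum.distrib algebra_simps)

lemma coord_form_sum_coeffs:
  "(\<Sum>k\<in>A. c k * coord_form ps (phi k) x) = coord_form ps (\<lambda>b. \<Sum>k\<in>A. c k * phi k b) x"
  unfolding coord_form_def sum_distrib_left sum_distrib_right
  by (subst sum.swap) (simp add: algebra_simps)

section \<open>Simple classes and the Coxeter transformation\<close>

lemma simple_cls_mod: "simple_cls ps i (m mod ps ! i) = simple_cls ps i m"
  by (simp add: simple_cls_def)

lemma simple_cls_cong: "m mod ps ! i = n mod ps ! i \<Longrightarrow> simple_cls ps i m = simple_cls ps i n"
  by (simp add: simple_cls_def)

lemma simple_cls_KA [simp]: "simple_cls ps i m KA = 0"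
  by (simp add: simple_cls_def sum_fun_apply kvec_def)

lemma simple_cls_KP [simp]: "simple_cls ps i m KP = (if m mod ps ! i = 0 then 1 else 0)"
  by (simp add: simple_cls_def sum_fun_apply kvec_def)

lemma simple_cls_KS:
  assumes "0 < ps ! i"
  shows "simple_cls ps i m (KS i' k) =
    (if i' = i \<and> 1 \<le> k \<and> k < ps ! i then
       (if m mod ps ! i = 0 then -1 else if k = m mod ps ! i then 1 else 0)
     else 0)"
proof -
  have "(\<Sum>j\<in>{1..<ps ! i}. kvec (KS i j) (KS i' k)) = (if i' = i \<and> 1 \<le> k \<and> k < ps ! i then 1 else 0)"
    by (cases "i' = i") (auto simp: kvec_def)
  then show ?thesis
    using assms by (auto simp: simple_cls_def sum_fun_apply kvec_def)
qed

lemma coord_form_simple_cls: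
  assumes "0 < ps ! i" "i < length ps"
  shows "coord_form ps phi (simple_cls ps i m) =
    (if m mod ps ! i = 0 then phi KP - (\<Sum>k\<in>{1..<ps ! i}. phi (KS i k))
     else phi (KS i (m mod ps ! i)))"
  using assms by (simp add: simple_cls_def coord_form_diff coord_form_sum coord_form_kvec)

lemma coxeter_apply: "coxeter ps v c = (\<Sum>b\<in>kbasis ps. v b * coxeter_basis ps b c)"
  by (simp add: coxeter_def sum_fun_apply)

lemma coxeter_diff: "coxeter ps (x - y) = coxeter ps x - coxeter ps y"
  by (simp add: fun_eq_iff coxeter_apply left_diff_distrib sum_subtractf)

lemma coxeter_sum: "coxeter ps (\<Sum>k\<in>A. x k) = (\<Sum>k\<in>A. coxeter ps (x k))"
  unfolding fun_eq_iff coxeter_apply sum_fun_apply sum_distrib_right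
  by (simp add: sum.swap[of _ A])

lemma coxeter_kvec:
  assumes "b \<in> kbasis ps"
  shows "coxeter ps (kvec b) = coxeter_basis ps b"
proof
  fix c
  have "coxeter ps (kvec b) c = (\<Sum>b'\<in>kbasis ps. if b' = b then coxeter_basis ps b c else 0)"
    unfolding coxeter_apply kvec_def by (intro sum.cong) auto
  then show "coxeter ps (kvec b) c = coxeter_basis ps b c"
    using assms by simp
qed

lemma coxeter_KA [simp]: "coxeter ps v KA = v KA"
  by (simp add: coxeter_apply sum_kbasis sum_fun_apply kvec_def)

lemma coxeter_basis_KA_KS:
  assumes "KS i k \<in> kbasis ps"
  shows "coxeter_basis ps KA (KS i k) = 1"
proof -
  have "(\<Sum>i'<length ps. \<Sum>j\<in>{1..<ps ! i'}. kvec (KS i' j) (KS i k)) = (\<Sum>i'<length ps. if i' = i then 1 else 0)"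
    using assms by (intro sum.cong) (auto simp: kvec_def)
  then show ?thesis
    using assms by (simp add: sum_fun_apply kvec_def)
qed

lemma coord_form_coxeter_basis:
  "coord_form ps phi (coxeter_basis ps KA) =
     phi KA - 2 * phi KP + (\<Sum>i<length ps. \<Sum>j\<in>{1..<ps ! i}. phi (KS i j))"
  "coord_form ps phi (coxeter_basis ps KP) = phi KP"
  by (simp_all add: coord_form_add coord_form_diff coord_form_numeral_mult coord_form_sum coord_form_kvec)

lemma coord_form_coxeter:
  "coord_form ps phi (coxeter ps x) = coord_form ps (\<lambda>b. coord_form ps phi (coxeter_basis ps b)) x"
  unfolding coxeter_def coord_form_sum coord_form_scale by (simp add: coord_form_def)

locale weight_type =
  fixes ps :: "nat list"
  assumes weights_ge_2: "\<forall>i<length ps. 2 \<le> ps ! i"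
begin

lemma weight_ge_2: "i < length ps \<Longrightarrow> 2 \<le> ps ! i"
  using weights_ge_2 by blast

lemma coxeter_simple_cls:
  assumes i: "i < length ps"
  shows "coxeter ps (simple_cls ps i m) = simple_cls ps i (Suc m)"
proof (cases "m mod ps ! i = 0")
  case False
  have "KS i (m mod ps ! i) \<in> kbasis ps"
    using False i weight_ge_2[OF i] by simp
  then have "coxeter ps (simple_cls ps i m) = simple_cls ps i (Suc (m mod ps ! i))"
    using False by (simp add: simple_cls_def coxeter_kvec)
  also have "\<dots> = simple_cls ps i (Suc m)"
    by (metis mod_Suc_eq simple_cls_mod)
  finally show ?thesis .
next
  case True
  \<comment> \<open>Here [S_{i,0}] = s_0 - \<Sum>j [S_{i,j}], and shifting every [S_{i,j}] leaves only [S_{i,1}].\<close>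
  let ?p = "ps ! i" and ?S = "simple_cls ps i"
  have p: "2 \<le> ?p"
    using weight_ge_2[OF i] .
  have S: "?S k = kvec (KS i k)" if "k \<in> {1..<?p}" for k
    using that by (simp add: simple_cls_def)
  have S0: "?S 0 = kvec KP - (\<Sum>k\<in>{1..<?p}. ?S k)"
    using S by (simp add: simple_cls_def)
  have shift: "(\<Sum>k\<in>{1..<?p}. ?S (Suc k)) = (\<Sum>k\<in>{2..<?p}. ?S k) + ?S 0"
    using p simple_cls_mod[of ps i ?p]
    by (simp add: sum.shift_bounds_Suc_ivl[symmetric] sum.atLeastLessThan_Suc numeral_2_eq_2)
  have split: "(\<Sum>k\<in>{1..<?p}. ?S k) = ?S 1 + (\<Sum>k\<in>{2..<?p}. ?S k)"
    using p by (simp add: sum.atLeast_Suc_lessThan numeral_2_eq_2)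
  have "coxeter ps (?S m) = coxeter ps (?S 0)"
    by (metis True simple_cls_mod)
  also have "\<dots> = kvec KP - (\<Sum>k\<in>{1..<?p}. ?S (Suc k))"
    using S i by (simp add: S0 coxeter_diff coxeter_sum coxeter_kvec)
  also have "\<dots> = ?S 1"
    by (subst shift, subst S0, subst split) simp
  also have "\<dots> = ?S (Suc m)"
  proof -
    have "Suc m mod ?p = 1"
      using p True by (simp add: mod_Suc)
    then show ?thesis
      by (metis simple_cls_mod)
  qed
  finally show ?thesis .
qed

lemma coxeter_pow_cls_s:
  "i < length ps \<Longrightarrow> (coxeter ps ^^ j) (cls_s ps i) = simple_cls ps i j"
  by (induction j) (simp_all add: cls_s_def coxeter_simple_cls)

lemma coxeter_KS:
  assumes i: "i < length ps" and k: "1 \<le> k" "k < ps ! i"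
  shows "coxeter ps v (KS i k) = v KA + (if 2 \<le> k then v (KS i (k - 1)) else 0) - v (KS i (ps ! i - 1))"
proof -
  let ?p = "ps ! i"
  have tube: "(\<Sum>j\<in>{1..<ps ! i'}. v (KS i' j) * coxeter_basis ps (KS i' j) (KS i k)) =
      (if i' = i then (\<Sum>j\<in>{1..<?p}. (if j = k - 1 then v (KS i j) else 0) - (if j = ?p - 1 then v (KS i j) else 0))
       else 0)" if i': "i' < length ps" for i'
    using weight_ge_2[OF i'] weight_ge_2[OF i] k
    by (auto intro!: sum.cong simp: simple_cls_KS mod_Suc)
  have "coxeter ps v (KS i k) =
      v KA + (\<Sum>i'<length ps. \<Sum>j\<in>{1..<ps ! i'}. v (KS i' j) * coxeter_basis ps (KS i' j) (KS i k))"
    using i k by (simp add: coxeter_apply sum_kbasis coxeter_basis_KA_KS kvec_def del: coxeter_basis.simps(1,3))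
  also have "\<dots> = v KA + (\<Sum>j\<in>{1..<?p}. (if j = k - 1 then v (KS i j) else 0) - (if j = ?p - 1 then v (KS i j) else 0))"
    using i by (subst sum.cong[OF refl tube]) simp_all
  also have "\<dots> = v KA + (if 2 \<le> k then v (KS i (k - 1)) else 0) - v (KS i (?p - 1))"
    using weight_ge_2[OF i] k by (auto simp: sum_subtractf)
  finally show ?thesis .
qed

end

section \<open>The Euler form\<close>

definition euler_coeffs :: "nat list \<Rightarrow> (kidx \<Rightarrow> int) \<Rightarrow> kidx \<Rightarrow> int" where
  "euler_coeffs ps v c = (\<Sum>b\<in>kbasis ps. v b * euler_basis ps b c)"

lemma euler_eq_coord_form: "euler ps v = coord_form ps (euler_coeffs ps v)"
  unfolding fun_eq_iff euler_def coord_form_def euler_coeffs_def sum_distrib_left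
  by (subst sum.swap) (simp add: algebra_simps)

lemma euler_kvec: "b \<in> kbasis ps \<Longrightarrow> euler ps v (kvec b) = euler_coeffs ps v b"
  by (simp add: euler_eq_coord_form coord_form_kvec)

lemma euler_coeffs_diff: "euler_coeffs ps (u - v) c = euler_coeffs ps u c - euler_coeffs ps v c"
  by (simp add: euler_coeffs_def left_diff_distrib sum_subtractf)

lemma euler_coeffs_sum: "euler_coeffs ps (\<Sum>k\<in>A. v k) c = (\<Sum>k\<in>A. euler_coeffs ps (v k) c)"
  unfolding euler_coeffs_def sum_fun_apply sum_distrib_right by (rule sum.swap)

lemma euler_coeffs_scale: "euler_coeffs ps (\<lambda>c. a * v c) c = a * euler_coeffs ps v c"
  by (simp add: euler_coeffs_def sum_distrib_left mult.assoc)

lemma euler_coeffs_KP: "euler_coeffs ps v KP = v KA"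
  by (simp add: euler_coeffs_def sum_kbasis)

lemma euler_coeffs_KS:
  assumes "i < length ps" "1 \<le> k" "k < ps ! i"
  shows "euler_coeffs ps v (KS i k) = v (KS i k) - (if 2 \<le> k then v (KS i (k - 1)) else 0)"
proof -
  have tube: "(\<Sum>j\<in>{1..<ps ! i'}. v (KS i' j) * euler_basis ps (KS i' j) (KS i k)) =
      (if i' = i then (\<Sum>j\<in>{1..<ps ! i}. (if j = k then v (KS i j) else 0) - (if j = k - 1 \<and> 2 \<le> k then v (KS i j) else 0))
       else 0)" for i'
    using assms by (auto intro!: sum.cong)
  have "euler_coeffs ps v (KS i k) =
      (\<Sum>i'<length ps. \<Sum>j\<in>{1..<ps ! i'}. v (KS i' j) * euler_basis ps (KS i' j) (KS i k))"
    by (simp add: euler_coeffs_def sum_kbasis)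
  also have "\<dots> = (\<Sum>j\<in>{1..<ps ! i}. (if j = k then v (KS i j) else 0) - (if j = k - 1 \<and> 2 \<le> k then v (KS i j) else 0))"
    using assms(1) by (subst sum.cong[OF refl tube]) simp_all
  also have "\<dots> = v (KS i k) - (if 2 \<le> k then v (KS i (k - 1)) else 0)"
    using assms by (auto simp: sum_subtractf)
  finally show ?thesis .
qed

lemma rk_eq_KA_coord: "rk ps x = x KA"
  by (simp add: rk_def cls_s0_def euler_kvec euler_coeffs_KP)

context weight_type
begin

lemma sum_simple_cls_last:
  assumes i: "i < length ps"
  shows "(\<Sum>i'<length ps. simple_cls ps i m (KS i' (ps ! i' - 1))) =
     (if m mod ps ! i = 0 then -1 else if m mod ps ! i = ps ! i - 1 then 1 else 0)"
proof -
  have "(\<Sum>i'<length ps. simple_cls ps i m (KS i' (ps ! i' - 1))) =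
      (\<Sum>i'<length ps. if i' = i then simple_cls ps i m (KS i (ps ! i - 1)) else 0)"
    using weight_ge_2[OF i] by (intro sum.cong) (auto simp: simple_cls_KS)
  then show ?thesis
    using i weight_ge_2[OF i] by (auto simp: simple_cls_KS)
qed

lemma euler_coeffs_KA:
  "euler_coeffs ps v KA = v KA - v KP - (\<Sum>i<length ps. v (KS i (ps ! i - 1)))"
proof -
  have tube: "(\<Sum>j\<in>{1..<ps ! i}. v (KS i j) * euler_basis ps (KS i j) KA) = - v (KS i (ps ! i - 1))"
    if "i < length ps" for i
    using weight_ge_2[OF that] by (auto simp: if_distrib[of "(*) _"] cong: if_cong)
  have "euler_coeffs ps v KA = v KA - v KP +
      (\<Sum>i<length ps. \<Sum>j\<in>{1..<ps ! i}. v (KS i j) * euler_basis ps (KS i j) KA)"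
    by (simp add: euler_coeffs_def sum_kbasis del: euler_basis.simps(6))
  also have "\<dots> = v KA - v KP - (\<Sum>i<length ps. v (KS i (ps ! i - 1)))"
    by (subst sum.cong[OF refl tube]) (simp_all add: sum_negf)
  finally show ?thesis .
qed

lemma euler_coeffs_simple_cls_KA:
  assumes i: "i < length ps"
  shows "euler_coeffs ps (simple_cls ps i m) KA = (if m mod ps ! i = ps ! i - 1 then -1 else 0)"
  unfolding euler_coeffs_KA sum_simple_cls_last[OF i] using weight_ge_2[OF i] by auto

lemma euler_coeffs_simple_cls_KS:
  assumes i: "i < length ps" and k: "i' < length ps" "1 \<le> k" "k < ps ! i'"
  shows "euler_coeffs ps (simple_cls ps i m) (KS i' k) =
    (if i' = i then (if k = m mod ps ! i then 1 else 0) - (if k = Suc m mod ps ! i then 1 else 0) else 0)"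
proof -
  have "m mod ps ! i < ps ! i"
    using weight_ge_2[OF i] by simp
  then show ?thesis
    using weight_ge_2[OF i] k by (auto simp: euler_coeffs_KS simple_cls_KS mod_Suc)
qed

lemma euler_simple_cls:
  assumes i: "i < length ps"
  shows "euler ps v (simple_cls ps i m) =
    (if m mod ps ! i = 0 then v KA - v (KS i (ps ! i - 1))
     else v (KS i (m mod ps ! i)) - (if 2 \<le> m mod ps ! i then v (KS i (m mod ps ! i - 1)) else 0))"
proof -
  let ?p = "ps ! i"
  have p: "2 \<le> ?p"
    using weight_ge_2[OF i] .
  have "(\<Sum>k\<in>{1..<?p}. euler_coeffs ps v (KS i k)) =
      (\<Sum>k\<in>{1..<Suc (?p - 1)}. v (KS i k) - (if 2 \<le> k then v (KS i (k - 1)) else 0))"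
    using i p by (intro sum.cong) (auto simp: euler_coeffs_KS)
  also have "\<dots> = v (KS i (?p - 1))"
    using p by (simp only: sum_telescope_from_1[of "\<lambda>k. v (KS i k)"]) simp
  finally show ?thesis
    using i p by (auto simp: euler_eq_coord_form coord_form_simple_cls euler_coeffs_KP euler_coeffs_KS)
qed

lemma euler_coxeter_simple_cls:
  assumes i: "i < length ps"
  shows "euler ps (coxeter ps v) (simple_cls ps i (Suc m)) = euler ps v (simple_cls ps i m)"
proof -
  let ?p = "ps ! i"
  have p: "2 \<le> ?p" "m mod ?p < ?p"
    using weight_ge_2[OF i] by auto
  have Suc_mod: "Suc m mod ?p = (if m mod ?p = ?p - 1 then 0 else Suc (m mod ?p))"
    using p by (auto simp: mod_Suc)
  consider "m mod ?p = ?p - 1" | "m mod ?p = 0" | "1 \<le> m mod ?p" "m mod ?p < ?p - 1"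
    using p by linarith
  then show ?thesis
  proof cases
  qed (use p i in \<open>simp add: euler_simple_cls Suc_mod coxeter_KS\<close>)+
qed

lemma euler_coxeter_pow_cls_a_simple_cls:
  assumes i: "i < length ps"
  shows "euler ps ((coxeter ps ^^ j) cls_a) (simple_cls ps i m) = (if j mod ps ! i = m mod ps ! i then 1 else 0)"
proof (induction j arbitrary: m)
  case 0
  show ?case
    using i by (simp add: euler_simple_cls cls_a_def kvec_def)
next
  case (Suc j)
  let ?p = "ps ! i"
  have p: "2 \<le> ?p"
    using weight_ge_2[OF i] .
  have "simple_cls ps i m = simple_cls ps i (Suc (m + ?p - 1))"
    using p by (intro simple_cls_cong) simp
  then have "euler ps ((coxeter ps ^^ Suc j) cls_a) (simple_cls ps i m) =
      (if j mod ?p = (m + ?p - 1) mod ?p then 1 else 0)"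
    using i by (simp add: euler_coxeter_simple_cls Suc.IH)
  also have "(j mod ?p = (m + ?p - 1) mod ?p) \<longleftrightarrow> (Suc j mod ?p = m mod ?p)"
  proof -
    have "Suc (m + ?p - 1) = m + ?p"
      using p by simp
    then show ?thesis
      using Suc_mod_eq_Suc_mod_iff[of ?p j "m + ?p - 1"] p by simp
  qed
  finally show ?case .
qed

end

section \<open>Forms killing the image of 1 + \<Phi>\<close>

definition coxeter_dual_neg :: "nat list \<Rightarrow> (kidx \<Rightarrow> 'a::comm_ring_1) \<Rightarrow> bool" where
  "coxeter_dual_neg ps phi \<longleftrightarrow> (\<forall>b\<in>kbasis ps. phi b + coord_form ps phi (coxeter_basis ps b) = 0)"

lemma kills_image_coord_form_iff: "kills_image ps (coord_form ps phi) \<longleftrightarrow> coxeter_dual_neg ps phi"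
  unfolding kills_image_def coxeter_dual_neg_def coord_form_add coord_form_coxeter
    coord_form_add_coeffs coord_form_eq_0_iff ..

lemma coxeter_dual_neg_cong:
  "(\<And>b. b \<in> kbasis ps \<Longrightarrow> phi b = psi b) \<Longrightarrow> coxeter_dual_neg ps phi \<longleftrightarrow> coxeter_dual_neg ps psi"
  unfolding coxeter_dual_neg_def using coord_form_cong[of ps phi psi] by auto

context weight_type
begin

lemma coxeter_dual_neg_iff:
  "coxeter_dual_neg ps phi \<longleftrightarrow>
     2 * phi KA - 2 * phi KP + (\<Sum>i<length ps. \<Sum>j\<in>{1..<ps ! i}. phi (KS i j)) = 0 \<and>
     2 * phi KP = 0 \<and>
     (\<forall>i<length ps. \<forall>j. 1 \<le> j \<and> j < ps ! i \<longrightarrow>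
        phi (KS i j) + (if Suc j = ps ! i then phi KP - (\<Sum>k\<in>{1..<ps ! i}. phi (KS i k))
                        else phi (KS i (Suc j))) = 0)"
proof -
  have tube: "coord_form ps phi (coxeter_basis ps (KS i j)) =
      (if Suc j = ps ! i then phi KP - (\<Sum>k\<in>{1..<ps ! i}. phi (KS i k)) else phi (KS i (Suc j)))"
    if "i < length ps" "1 \<le> j" "j < ps ! i" for i j
    using that by (auto simp: coord_form_simple_cls mod_Suc)
  show ?thesis
    unfolding coxeter_dual_neg_def ball_kbasis coord_form_coxeter_basis
    by (simp add: tube mult_2 algebra_simps del: coxeter_basis.simps)
qed

end

section \<open>Integral forms\<close>

definition alternating_form :: "int \<Rightarrow> (nat \<Rightarrow> int) \<Rightarrow> kidx \<Rightarrow> int" where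
  "alternating_form a z b = (case b of KA \<Rightarrow> a | KP \<Rightarrow> 0 | KS i j \<Rightarrow> (-1) ^ j * z i)"

lemma alternating_form_simps [simp]:
  "alternating_form a z KA = a"
  "alternating_form a z KP = 0"
  "alternating_form a z (KS i j) = (-1) ^ j * z i"
  by (simp_all add: alternating_form_def)

lemma alternating_form_lincomb:
  "(\<Sum>k\<in>A. c k * alternating_form (a k) (z k) b) =
     alternating_form (\<Sum>k\<in>A. c k * a k) (\<lambda>i. \<Sum>k\<in>A. c k * z k i) b"
  by (cases b) (simp_all add: sum_distrib_left algebra_simps)

definition form_amplitude :: "nat \<Rightarrow> nat \<Rightarrow> int" where
  "form_amplitude k i =
    (if k = 0 then (if i = 0 then 2 else 0) else (if i = k then 1 else 0) - (if i = 0 then 1 else 0))"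

lemma sum_form_amplitude:
  assumes "0 < r"
  shows "(\<Sum>k<r. c k * form_amplitude k i) =
    (if i = 0 then 2 * c 0 - (\<Sum>k\<in>{1..<r}. c k) else if i < r then c i else 0)"
proof -
  have "(\<Sum>k<r. c k * form_amplitude k i) = c 0 * form_amplitude 0 i + (\<Sum>k\<in>{1..<r}. c k * form_amplitude k i)"
    using assms by (simp add: lessThan_atLeast0 sum.atLeast_Suc_lessThan)
  also have "(\<Sum>k\<in>{1..<r}. c k * form_amplitude k i) =
      (\<Sum>k\<in>{1..<r}. (if k = i then c k else 0) - of_bool (i = 0) * c k)"
    by (intro sum.cong) (auto simp: form_amplitude_def)
  also have "\<dots> = (if i \<in> {1..<r} then c i else 0) - of_bool (i = 0) * (\<Sum>k\<in>{1..<r}. c k)"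
    by (simp add: sum_subtractf sum_distrib_left)
  finally show ?thesis
    by (auto simp: form_amplitude_def)
qed

lemma form_amplitude_combination_iff:
  fixes z :: "nat \<Rightarrow> int"
  assumes r: "0 < r" "r \<le> n" and c: "\<forall>k. r \<le> k \<longrightarrow> c k = 0"
    and z_0: "z 0 = 2 * a - (\<Sum>k\<in>{1..<r}. z k)" and z_beyond_r: "\<forall>i. r \<le> i \<and> i < n \<longrightarrow> z i = 0"
  shows "a = c 0 \<and> (\<forall>i<n. z i = (\<Sum>k<r. c k * form_amplitude k i)) \<longleftrightarrow>
    c = (\<lambda>k. if k = 0 then a else if k < r then z k else 0)"
    (is "_ \<longleftrightarrow> c = ?c")
proof
  assume c_sol: "a = c 0 \<and> (\<forall>i<n. z i = (\<Sum>k<r. c k * form_amplitude k i))"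
  have "z k = c k" if "0 < k" "k < r" for k
    using c_sol[THEN conjunct2, rule_format, of k] that r sum_form_amplitude[OF r(1), of c k] by simp
  then show "c = ?c"
    using c c_sol by (auto simp: fun_eq_iff)
next
  have "(\<Sum>k\<in>{1..<r}. ?c k) = (\<Sum>k\<in>{1..<r}. z k)"
    by (intro sum.cong) auto
  then have "z i = (\<Sum>k<r. ?c k * form_amplitude k i)" if "i < n" for i
    using that z_0 z_beyond_r by (auto simp: sum_form_amplitude[OF r(1)])
  then show "a = c 0 \<and> (\<forall>i<n. z i = (\<Sum>k<r. c k * form_amplitude k i))" if "c = ?c"
    using that by simp
qed

context weight_type
begin

lemma alternating_form_eq_on_kbasis_iff:
  "(\<forall>b\<in>kbasis ps. alternating_form a z b = alternating_form a' z' b) \<longleftrightarrow>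
     a = a' \<and> (\<forall>i<length ps. z i = z' i)"
proof
  assume eq: "\<forall>b\<in>kbasis ps. alternating_form a z b = alternating_form a' z' b"
  have "z i = z' i" if "i < length ps" for i
    using eq[rule_format, of "KS i 1"] weight_ge_2[OF that] that by simp
  then show "a = a' \<and> (\<forall>i<length ps. z i = z' i)"
    using eq[rule_format, of KA] by simp
qed (auto simp: ball_kbasis)

lemma sum_alternating_tube:
  assumes "i < length ps"
  shows "(\<Sum>j\<in>{1..<ps ! i}. (-1) ^ j * c) = (if even (ps ! i) then - c else (0::int))"
  using weight_ge_2[OF assms] sum_alternating_signs[of "ps ! i"] by (simp add: sum_distrib_right[symmetric])

lemma alternating_form_tube_eqs_iff:
  "(\<forall>i<length ps. \<forall>j. 1 \<le> j \<and> j < ps ! i \<longrightarrow>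
      alternating_form a z (KS i j) +
      (if Suc j = ps ! i then alternating_form a z KP - (\<Sum>k\<in>{1..<ps ! i}. alternating_form a z (KS i k))
       else alternating_form a z (KS i (Suc j))) = 0) \<longleftrightarrow>
    (\<forall>i<length ps. odd (ps ! i) \<longrightarrow> z i = 0)"
proof -
  have tube_eq: "(-1) ^ j * z i + (if Suc j = ps ! i then 0 - (\<Sum>k\<in>{1..<ps ! i}. (-1) ^ k * z i)
        else (-1) ^ Suc j * z i) = 0 \<longleftrightarrow> (Suc j = ps ! i \<longrightarrow> odd (ps ! i) \<longrightarrow> z i = 0)"
    if "i < length ps" for i j
  proof (cases "Suc j = ps ! i")
    case True
    have "(-1) ^ j = (if even (Suc j) then -1 else (1::int))"
      by simp
    then have "(-1) ^ j = (if even (ps ! i) then -1 else (1::int))"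
      unfolding True .
    then show ?thesis
      using True sum_alternating_tube[OF that] by simp
  qed simp
  have last: "Suc (ps ! i - 1) = ps ! i \<and> 1 \<le> ps ! i - 1 \<and> ps ! i - 1 < ps ! i" if "i < length ps" for i
    using weight_ge_2[OF that] by auto
  have tubes: "(\<forall>i<length ps. \<forall>j. 1 \<le> j \<and> j < ps ! i \<longrightarrow> (Suc j = ps ! i \<longrightarrow> odd (ps ! i) \<longrightarrow> z i = 0)) \<longleftrightarrow>
      (\<forall>i<length ps. odd (ps ! i) \<longrightarrow> z i = 0)"
    using last by metis
  show ?thesis
    unfolding alternating_form_simps tubes[symmetric] using tube_eq by simp
qed

lemma coxeter_dual_neg_alternating_form_iff:
  "coxeter_dual_neg ps (alternating_form a z) \<longleftrightarrow>
     (\<forall>i<length ps. odd (ps ! i) \<longrightarrow> z i = 0) \<and> 2 * a = (\<Sum>i<length ps. z i)"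
proof -
  have "(\<Sum>i<length ps. \<Sum>j\<in>{1..<ps ! i}. (-1) ^ j * z i) = - (\<Sum>i<length ps. z i)"
    if "\<forall>i<length ps. odd (ps ! i) \<longrightarrow> z i = 0"
  proof -
    have "(\<Sum>i<length ps. \<Sum>j\<in>{1..<ps ! i}. (-1) ^ j * z i) = (\<Sum>i<length ps. - z i)"
      using that by (intro sum.cong refl) (subst sum_alternating_tube, auto)
    then show ?thesis
      by (simp add: sum_negf)
  qed
  then show ?thesis
    unfolding coxeter_dual_neg_iff alternating_form_tube_eqs_iff by auto
qed

lemma coxeter_dual_neg_int_imp_alternating:
  fixes phi :: "kidx \<Rightarrow> int"
  assumes phi: "coxeter_dual_neg ps phi" and b: "b \<in> kbasis ps"
  shows "phi b = alternating_form (phi KA) (\<lambda>i. - phi (KS i 1)) b"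
proof -
  note eqs = phi[unfolded coxeter_dual_neg_iff]
  have along_tube: "j < ps ! i \<longrightarrow> phi (KS i j) = (-1) ^ j * - phi (KS i 1)"
    if i: "i < length ps" and j: "1 \<le> j" for i j
    using j
  proof (induction j rule: dec_induct)
    case (step n)
    show ?case
    proof
      assume "Suc n < ps ! i"
      then have "phi (KS i n) + phi (KS i (Suc n)) = 0"
        using eqs[THEN conjunct2, THEN conjunct2, rule_format, OF i, of n] step(1) by simp
      then show "phi (KS i (Suc n)) = (-1) ^ Suc n * - phi (KS i 1)"
        using step \<open>Suc n < ps ! i\<close> by simp
    qed
  qed simp
  show ?thesis
  proof (cases b)
    case (KS i j)
    then show ?thesis
      using b along_tube[of i j] by simp
  qed (use eqs in simp_all)
qed

lemma euler_coeffs_s_hat: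
  assumes i: "i < length ps" and even: "even (ps ! i)" and b: "b \<in> kbasis ps"
  shows "euler_coeffs ps (s_hat ps i) b = alternating_form 1 (\<lambda>i'. if i' = i then 2 else 0) b"
proof -
  let ?p = "ps ! i"
  have p: "2 \<le> ?p"
    using weight_ge_2[OF i] .
  have s_hat: "euler_coeffs ps (s_hat ps i) c = (\<Sum>j<?p. (-1) ^ j * euler_coeffs ps (simple_cls ps i j) c)" for c
    unfolding s_hat_def euler_coeffs_sum euler_coeffs_scale coxeter_pow_cls_s[OF i] ..
  show ?thesis
  proof (cases b)
    case KA
    have "(\<Sum>j<?p. (-1) ^ j * euler_coeffs ps (simple_cls ps i j) KA) =
        (\<Sum>j<?p. if j = ?p - 1 then - ((-1) ^ (?p - 1)) else 0)"
      using i by (intro sum.cong) (auto simp: euler_coeffs_simple_cls_KA)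
    also have "\<dots> = 1"
      using p even by (simp add: neg_one_odd_power)
    finally show ?thesis
      using KA s_hat by simp
  next
    case KP
    then show ?thesis
      unfolding s_hat by (simp add: euler_coeffs_KP)
  next
    case (KS i' k)
    then have k: "i' < length ps" "1 \<le> k" "k < ps ! i'"
      using b by auto
    have "(\<Sum>j<?p. (-1) ^ j * euler_coeffs ps (simple_cls ps i j) (KS i' k)) =
        (if i' = i then (\<Sum>j<?p. (if j = k then (-1) ^ k else 0) - (if j = k - 1 then (-1) ^ (k - 1) else 0)) else 0)"
      using i k by (auto intro!: sum.cong simp: euler_coeffs_simple_cls_KS mod_Suc)
    also have "\<dots> = (if i' = i then 2 * (-1) ^ k else 0)"
      using k by (cases k) (auto simp: sum_subtractf)
    finally show ?thesis
      using KS s_hat by simp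
  qed
qed

lemma euler_coeffs_s_tilde:
  assumes i: "i < length ps" and even: "even (ps ! i)" and b: "b \<in> kbasis ps"
  shows "euler_coeffs ps (s_tilde ps i) b = alternating_form 0 (\<lambda>i'. if i' = i then 1 else 0) b"
proof -
  let ?p = "ps ! i"
  have s_tilde: "euler_coeffs ps (s_tilde ps i) c = (\<Sum>j<?p div 2. euler_coeffs ps (simple_cls ps i (2 * j)) c)" for c
    unfolding s_tilde_def euler_coeffs_sum coxeter_pow_cls_s[OF i] ..
  have small: "2 * j mod ?p = 2 * j" "Suc (2 * j) mod ?p = Suc (2 * j)" if "j < ?p div 2" for j
    using that even by auto
  show ?thesis
  proof (cases b)
    case KA
    have "euler_coeffs ps (simple_cls ps i (2 * j)) KA = 0" if "j < ?p div 2" for j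
      using that even small[OF that] by (auto simp: euler_coeffs_simple_cls_KA[OF i])
    then show ?thesis
      using KA s_tilde by simp
  next
    case KP
    then show ?thesis
      unfolding s_tilde by (simp add: euler_coeffs_KP)
  next
    case (KS i' k)
    then have k: "i' < length ps" "1 \<le> k" "k < ps ! i'"
      using b by auto
    have "(\<Sum>j<?p div 2. euler_coeffs ps (simple_cls ps i (2 * j)) (KS i' k)) =
        (if i' = i then (\<Sum>j<?p div 2. if j = k div 2 then (-1) ^ k else 0) else 0)"
    proof -
      have parity: "(if k = 2 * j then 1 else 0) - (if k = Suc (2 * j) then 1 else 0) =
          (if j = k div 2 then (-1) ^ k else (0::int))" for j
        by (cases "even k") (auto elim!: evenE oddE)
      show ?thesis
        using small by (auto intro!: sum.cong simp: euler_coeffs_simple_cls_KS[OF i k] parity)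
    qed
    also have "\<dots> = (if i' = i then (-1) ^ k else 0)"
      using k even by auto
    finally show ?thesis
      using KS s_tilde by simp
  qed
qed

lemma forms_i_eq_coord_form:
  assumes k: "k < length ps" and even: "even (ps ! 0)" "even (ps ! k)"
  shows "forms_i ps k = coord_form ps (alternating_form (of_bool (k = 0)) (form_amplitude k))"
proof -
  have "euler_coeffs ps (if k = 0 then s_hat ps 0 else s_tilde ps k - s_tilde ps 0) b =
      alternating_form (of_bool (k = 0)) (form_amplitude k) b" if b: "b \<in> kbasis ps" for b
  proof -
    have "0 < length ps"
      using k by (cases ps) auto
    then show ?thesis
      using euler_coeffs_s_hat[of 0 b] euler_coeffs_s_tilde[of 0 b] euler_coeffs_s_tilde[OF k even(2) b] even b
      by (cases b) (auto simp: euler_coeffs_diff form_amplitude_def)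
  qed
  then show ?thesis
    unfolding forms_i_def euler_eq_coord_form by (auto intro: coord_form_cong)
qed

end

locale weight_type_parity = weight_type +
  fixes r :: nat
  assumes r_le: "r \<le> length ps"
    and evens: "\<forall>i<r. even (ps ! i)"
    and odds: "\<forall>i. r \<le> i \<and> i < length ps \<longrightarrow> odd (ps ! i)"
begin

lemma forms_i_eq_alternating:
  assumes "0 < r" "k < r"
  shows "forms_i ps k = coord_form ps (alternating_form (of_bool (k = 0)) (form_amplitude k))"
  using assms r_le evens by (intro forms_i_eq_coord_form) auto

lemma kills_image_forms_i:
  assumes "0 < r" "k < r"
  shows "kills_image ps (forms_i ps k)"
proof -
  have "z i = 0" if "i < length ps" "odd (ps ! i)" "z = form_amplitude k" for i z
    using that assms evens odds by (auto simp: form_amplitude_def)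
  moreover have "2 * of_bool (k = 0) = (\<Sum>i<length ps. form_amplitude k i)"
    using assms r_le by (auto simp: form_amplitude_def sum_subtractf)
  ultimately show ?thesis
    unfolding forms_i_eq_alternating[OF assms] kills_image_coord_form_iff
      coxeter_dual_neg_alternating_form_iff by blast
qed

lemma linform_eq_forms_i_combination_iff:
  assumes "0 < r" and phi: "\<forall>b\<in>kbasis ps. phi b = alternating_form a z b"
  shows "(\<forall>x\<in>K0 ps. linform ps phi x = (\<Sum>k<r. c k * forms_i ps k x)) \<longleftrightarrow>
    a = c 0 \<and> (\<forall>i<length ps. z i = (\<Sum>k<r. c k * form_amplitude k i))"
proof -
  let ?z = "\<lambda>i. \<Sum>k<r. c k * form_amplitude k i"
  have combination: "(\<Sum>k<r. c k * forms_i ps k x) = coord_form ps (alternating_form (c 0) ?z) x" for x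
    using assms(1) by (simp add: forms_i_eq_alternating coord_form_sum_coeffs alternating_form_lincomb)
  have "(\<forall>x\<in>K0 ps. linform ps phi x = (\<Sum>k<r. c k * forms_i ps k x)) \<longleftrightarrow>
      (\<forall>b\<in>kbasis ps. phi b = alternating_form (c 0) ?z b)"
    by (simp only: linform_eq_coord_form combination coord_form_eq_on_K0_iff)
  also have "\<dots> \<longleftrightarrow> (\<forall>b\<in>kbasis ps. alternating_form a z b = alternating_form (c 0) ?z b)"
    using phi by simp
  finally show ?thesis
    unfolding alternating_form_eq_on_kbasis_iff by auto
qed

lemma linform_unique_forms_i_combination:
  assumes r: "0 < r" and kills: "kills_image ps (linform ps phi)"
  shows "\<exists>!c::nat \<Rightarrow> int. (\<forall>k. r \<le> k \<longrightarrow> c k = 0) \<and>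
           (\<forall>x\<in>K0 ps. linform ps phi x = (\<Sum>k<r. c k * forms_i ps k x))"
proof -
  define a where "a = phi KA"
  define z where "z i = - phi (KS i 1)" for i
  have dual: "coxeter_dual_neg ps phi"
    using kills by (simp add: linform_eq_coord_form kills_image_coord_form_iff)
  have phi: "\<forall>b\<in>kbasis ps. phi b = alternating_form a z b"
    unfolding a_def z_def using coxeter_dual_neg_int_imp_alternating[OF dual] by blast
  then have "coxeter_dual_neg ps (alternating_form a z)"
    using dual coxeter_dual_neg_cong by blast
  then have z_odd: "\<forall>i<length ps. odd (ps ! i) \<longrightarrow> z i = 0" and z_sum: "2 * a = (\<Sum>i<length ps. z i)"
    unfolding coxeter_dual_neg_alternating_form_iff by blast+
  have z_beyond_r: "\<forall>i. r \<le> i \<and> i < length ps \<longrightarrow> z i = 0"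
    using odds z_odd by blast
  have "(\<Sum>i<length ps. z i) = (\<Sum>i<r. z i)"
    using r_le z_beyond_r by (intro sum.mono_neutral_right) auto
  then have z_0: "z 0 = 2 * a - (\<Sum>k\<in>{1..<r}. z k)"
    using r z_sum by (simp add: lessThan_atLeast0 sum.atLeast_Suc_lessThan)
  let ?c = "\<lambda>k. if k = 0 then a else if k < r then z k else 0"
  have c_beyond_r: "\<forall>k. r \<le> k \<longrightarrow> ?c k = 0"
    using r by simp
  note solution = form_amplitude_combination_iff[OF r r_le _ z_0 z_beyond_r]
  show ?thesis
    unfolding linform_eq_forms_i_combination_iff[OF r phi]
  proof (rule ex1I[of _ ?c])
    show "(\<forall>k. r \<le> k \<longrightarrow> ?c k = 0) \<and> a = ?c 0 \<and> (\<forall>i<length ps. z i = (\<Sum>k<r. ?c k * form_amplitude k i))"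
      using solution[OF c_beyond_r] c_beyond_r by simp
  next
    fix c
    assume "(\<forall>k. r \<le> k \<longrightarrow> c k = 0) \<and> a = c 0 \<and> (\<forall>i<length ps. z i = (\<Sum>k<r. c k * form_amplitude k i))"
    then show "c = ?c"
      using solution[of c] by blast
  qed
qed

end

section \<open>Forms modulo 2\<close>

definition rank_coeffs :: "kidx \<Rightarrow> bit" where
  "rank_coeffs b = of_bool (b = KA)"

definition degree_coeffs :: "kidx \<Rightarrow> bit" where
  "degree_coeffs b = of_bool (b \<noteq> KA)"

lemma rk2_eq_coord_form: "rk2 ps = coord_form ps rank_coeffs"
  by (simp add: fun_eq_iff rk2_def rk_eq_KA_coord coord_form_def rank_coeffs_def sum_kbasis)

definition deg_coeffs :: "nat list \<Rightarrow> kidx \<Rightarrow> int" where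
  "deg_coeffs ps b = (if b = KA then 0 else \<Sum>j<wlcm ps. euler_coeffs ps ((coxeter ps ^^ j) cls_a) b)"

lemma deg_eq_coord_form: "deg ps = coord_form ps (deg_coeffs ps)"
proof
  fix x
  have rank_part: "euler ps v (x - (\<lambda>c. rk ps x * cls_a c)) =
      1 * coord_form ps (\<lambda>b. if b = KA then 0 else euler_coeffs ps v b) x" for v
    by (simp add: euler_eq_coord_form coord_form_diff coord_form_scale rk_eq_KA_coord cls_a_def
        coord_form_kvec) (simp add: coord_form_def sum_kbasis)
  show "deg ps x = coord_form ps (deg_coeffs ps) x"
    unfolding deg_def rank_part coord_form_sum_coeffs
    by (rule arg_cong[where f = "\<lambda>phi. coord_form ps phi x"]) (simp add: fun_eq_iff deg_coeffs_def)
qed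

context weight_type
begin

lemma deg_coeffs_KP: "deg_coeffs ps KP = int (wlcm ps)"
proof -
  have "(coxeter ps ^^ j) cls_a KA = 1" for j
    by (induction j) (simp_all add: cls_a_def kvec_def)
  then show ?thesis
    by (simp add: deg_coeffs_def euler_coeffs_KP)
qed

lemma deg_coeffs_KS:
  assumes i: "i < length ps" and k: "1 \<le> k" "k < ps ! i"
  shows "deg_coeffs ps (KS i k) = int (wlcm ps div ps ! i)"
proof -
  obtain q where q: "wlcm ps = ps ! i * q"
    using i unfolding wlcm_def by (metis dvd_Lcm nth_mem dvdE)
  have "simple_cls ps i k = kvec (KS i k)"
    using k by (simp add: simple_cls_def)
  then have "euler_coeffs ps ((coxeter ps ^^ j) cls_a) (KS i k) = (if j mod ps ! i = k then 1 else 0)" for j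
    using i k euler_coxeter_pow_cls_a_simple_cls[OF i, of j k] by (simp add: euler_kvec)
  then have "deg_coeffs ps (KS i k) = (\<Sum>j<ps ! i * q. if j mod ps ! i = k then 1 else 0)"
    by (simp add: deg_coeffs_def q)
  also have "\<dots> = int q"
    using k(2) by (rule sum_indicator_mod_eq)
  finally show ?thesis
    using weight_ge_2[OF i] q by simp
qed

end

locale odd_weight_type = weight_type +
  assumes odd_weights: "\<forall>i<length ps. odd (ps ! i)"
begin

lemma odd_wlcm: "odd (wlcm ps)"
proof
  assume "even (wlcm ps)"
  moreover have "wlcm ps dvd (\<Prod>p\<in>set ps. p)"
    unfolding wlcm_def by (rule Lcm_least) (auto intro: dvd_prodI)
  ultimately have "even (\<Prod>p\<in>set ps. p)"
    by (rule dvd_trans)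
  then show False
    using odd_weights by (auto simp: even_prod_iff in_set_conv_nth)
qed

lemma deg2_eq_coord_form: "deg2 ps = coord_form ps degree_coeffs"
proof -
  have coeffs: "of_int (deg_coeffs ps b) = degree_coeffs b" if b: "b \<in> kbasis ps" for b
  proof (cases b)
    case KP
    then show ?thesis
      using odd_wlcm of_nat_bit_eq_0_iff[of "wlcm ps"] by (simp add: degree_coeffs_def deg_coeffs_KP)
  next
    case (KS i k)
    then have i: "i < length ps" and k: "1 \<le> k" "k < ps ! i"
      using b by auto
    obtain q where "wlcm ps = ps ! i * q"
      using i unfolding wlcm_def by (metis dvd_Lcm nth_mem dvdE)
    then have "odd (wlcm ps div ps ! i)"
      using odd_wlcm weight_ge_2[OF i] by auto
    then show ?thesis
      using KS of_nat_bit_eq_0_iff[of "wlcm ps div ps ! i"] by (simp add: degree_coeffs_def deg_coeffs_KS[OF i k])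
  qed (simp add: degree_coeffs_def deg_coeffs_def)
  have "deg2 ps = coord_form ps (\<lambda>b. of_int (deg_coeffs ps b))"
    by (simp add: fun_eq_iff deg2_def deg_eq_coord_form coord_form_of_int)
  also have "\<dots> = coord_form ps degree_coeffs"
    using coeffs by (rule coord_form_cong)
  finally show ?thesis .
qed

lemma sum_tube_constant_bit:
  assumes i: "i < length ps" and const: "\<forall>k. 1 \<le> k \<and> k < ps ! i \<longrightarrow> phi (KS i k) = c"
  shows "(\<Sum>k\<in>{1..<ps ! i}. phi (KS i k)) = (0::bit)"
proof -
  have "(of_nat (ps ! i - 1) :: bit) = 0"
    using odd_weights weight_ge_2[OF i] i by (simp add: of_nat_bit_eq_0_iff)
  then show ?thesis
    using const by simp
qed

lemma coxeter_dual_neg_bit_tube_constant: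
  assumes dual: "coxeter_dual_neg ps (phi :: kidx \<Rightarrow> bit)"
    and i: "i < length ps" and j: "1 \<le> j" "j < ps ! i"
  shows "phi (KS i j) = phi KP"
proof -
  have eqs: "phi (KS i n) + (if Suc n = ps ! i then phi KP - (\<Sum>k\<in>{1..<ps ! i}. phi (KS i k))
      else phi (KS i (Suc n))) = 0" if "1 \<le> n" "n < ps ! i" for n
    using dual i that unfolding coxeter_dual_neg_iff by blast
  have along_tube: "n < ps ! i \<longrightarrow> phi (KS i n) = phi (KS i 1)" if "1 \<le> n" for n
    using that
  proof (induction n rule: dec_induct)
    case (step n)
    then show ?case
      using eqs[OF step(1)] by (auto simp: bit_add_eq_0_iff)
  qed simp
  have last: "Suc (ps ! i - 1) = ps ! i" "1 \<le> ps ! i - 1" "ps ! i - 1 < ps ! i"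
    using weight_ge_2[OF i] by auto
  have "(\<Sum>k\<in>{1..<ps ! i}. phi (KS i k)) = 0"
    using along_tube by (intro sum_tube_constant_bit[OF i]) blast
  then have "phi (KS i (ps ! i - 1)) + phi KP = 0"
    using eqs[OF last(2,3)] last(1) by simp
  moreover have "phi (KS i (ps ! i - 1)) = phi (KS i 1)" "phi (KS i j) = phi (KS i 1)"
    using along_tube last j by blast+
  ultimately show ?thesis
    by (metis bit_add_eq_0_iff)
qed

lemma coxeter_dual_neg_bit_iff:
  "coxeter_dual_neg ps (phi :: kidx \<Rightarrow> bit) \<longleftrightarrow>
     (\<forall>i<length ps. \<forall>j. 1 \<le> j \<and> j < ps ! i \<longrightarrow> phi (KS i j) = phi KP)"
proof
  assume "coxeter_dual_neg ps phi"
  then show "\<forall>i<length ps. \<forall>j. 1 \<le> j \<and> j < ps ! i \<longrightarrow> phi (KS i j) = phi KP"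
    using coxeter_dual_neg_bit_tube_constant by blast
next
  assume const: "\<forall>i<length ps. \<forall>j. 1 \<le> j \<and> j < ps ! i \<longrightarrow> phi (KS i j) = phi KP"
  have "(\<Sum>i<length ps. \<Sum>j\<in>{1..<ps ! i}. phi (KS i j)) = (\<Sum>i<length ps. 0)"
    using const by (intro sum.cong refl sum_tube_constant_bit) auto
  moreover have "phi (KS i j) + (if Suc j = ps ! i then phi KP - (\<Sum>k\<in>{1..<ps ! i}. phi (KS i k))
      else phi (KS i (Suc j))) = 0" if "i < length ps" "1 \<le> j" "j < ps ! i" for i j
    using that const sum_tube_constant_bit[OF that(1), of phi "phi KP"] by auto
  ultimately show "coxeter_dual_neg ps phi"
    unfolding coxeter_dual_neg_iff by simp
qed

lemma kills_image_rk2: "kills_image ps (rk2 ps)"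
  unfolding rk2_eq_coord_form kills_image_coord_form_iff coxeter_dual_neg_bit_iff
  by (simp add: rank_coeffs_def)

lemma kills_image_deg2: "kills_image ps (deg2 ps)"
  unfolding deg2_eq_coord_form kills_image_coord_form_iff coxeter_dual_neg_bit_iff
  by (simp add: degree_coeffs_def)

lemma linform2_unique_rk2_deg2_combination:
  assumes kills: "kills_image ps (linform2 ps phi)"
  shows "\<exists>!c::bit \<times> bit. \<forall>x\<in>K0 ps. linform2 ps phi x = fst c * rk2 ps x + snd c * deg2 ps x"
proof -
  have tubes: "\<forall>i<length ps. \<forall>j. 1 \<le> j \<and> j < ps ! i \<longrightarrow> phi (KS i j) = phi KP"
    using kills by (simp add: linform2_eq_coord_form kills_image_coord_form_iff coxeter_dual_neg_bit_iff)
  have "(\<forall>x\<in>K0 ps. linform2 ps phi x = fst c * rk2 ps x + snd c * deg2 ps x) \<longleftrightarrow> c = (phi KA, phi KP)"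
    for c :: "bit \<times> bit"
  proof -
    have "(\<forall>x\<in>K0 ps. linform2 ps phi x = fst c * rk2 ps x + snd c * deg2 ps x) \<longleftrightarrow>
        (\<forall>b\<in>kbasis ps. phi b = fst c * rank_coeffs b + snd c * degree_coeffs b)"
      by (simp only: linform2_eq_coord_form rk2_eq_coord_form deg2_eq_coord_form coord_form_lincomb
          coord_form_eq_on_K0_iff)
    also have "\<dots> \<longleftrightarrow> phi KA = fst c \<and> phi KP = snd c"
      unfolding ball_kbasis using tubes by (auto simp: rank_coeffs_def degree_coeffs_def)
    finally show ?thesis
      by (cases c) auto
  qed
  then show ?thesis
    by simp
qed

end

theorem proposition3p10:
  fixes ps :: "nat list" and r :: nat
  assumes weights: "\<forall>i<length ps. 2 \<le> ps ! i"
    and r_le: "r \<le> length ps"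
    and evens: "\<forall>i<r. even (ps ! i)"
    and odds: "\<forall>i. r \<le> i \<and> i < length ps \<longrightarrow> odd (ps ! i)"
  shows "(1 \<le> r \<longrightarrow>
            (\<forall>k<r. kills_image ps (forms_i ps k)) \<and>
            (\<forall>phi. kills_image ps (linform ps phi) \<longrightarrow>
               (\<exists>!c::nat \<Rightarrow> int. (\<forall>k. r \<le> k \<longrightarrow> c k = 0) \<and>
                  (\<forall>x\<in>K0 ps. linform ps phi x = (\<Sum>k<r. c k * forms_i ps k x)))))
       \<and> (r = 0 \<longrightarrow>
            kills_image ps (rk2 ps) \<and> kills_image ps (deg2 ps) \<and>
            (\<forall>phi. kills_image ps (linform2 ps phi) \<longrightarrow>
               (\<exists>!c::bit \<times> bit.
                  \<forall>x\<in>K0 ps. linform2 ps phi x = fst c * rk2 ps x + snd c * deg2 ps x)))"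
proof -
  have parity: "weight_type_parity ps r"
    using weights r_le evens odds by unfold_locales
  have odd: "odd_weight_type ps" if "r = 0"
    using weights odds that by unfold_locales auto
  show ?thesis
  proof (intro conjI impI allI)
    fix k
    assume "1 \<le> r" "k < r"
    then show "kills_image ps (forms_i ps k)"
      by (intro weight_type_parity.kills_image_forms_i[OF parity]) simp_all
  next
    fix phi
    assume "1 \<le> r" "kills_image ps (linform ps phi)"
    then show "\<exists>!c::nat \<Rightarrow> int. (\<forall>k. r \<le> k \<longrightarrow> c k = 0) \<and>
        (\<forall>x\<in>K0 ps. linform ps phi x = (\<Sum>k<r. c k * forms_i ps k x))"
      by (intro weight_type_parity.linform_unique_forms_i_combination[OF parity]) simp_all
  next
    assume "r = 0"
    then show "kills_image ps (rk2 ps)" "kills_image ps (deg2 ps)"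
      by (simp_all add: odd_weight_type.kills_image_rk2[OF odd] odd_weight_type.kills_image_deg2[OF odd])
  next
    fix phi
    assume "r = 0" "kills_image ps (linform2 ps phi)"
    then show "\<exists>!c::bit \<times> bit. \<forall>x\<in>K0 ps. linform2 ps phi x = fst c * rk2 ps x + snd c * deg2 ps x"
      by (intro odd_weight_type.linform2_unique_rk2_deg2_combination[OF odd])
  qed
qed

end
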